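(* Let $\mathcal{A}$ be a finite alphabet and $\mathcal{F}$ a finite set of finite patterns on $\mathbb{Z}^d$. Player $B$ has a winning strategy in $\Gamma(\mathcal{A},\mathcal{F},\mathbb{Z}^d)$ if and only if, for every integer $n\ge 1$, player $B$ has a winning strategy in $\Gamma(\mathcal{A},\mathcal{F},\llbracket -n,n\rrbracket^d)$.
   Context: Fix $d\ge 1$ and a finite alphabet $\mathcal{A}$. A pattern is a pair $p=(S,f)$ with $S\subseteq\mathbb{Z}^d$ and $f\in\mathcal{A}^S$. A finite pattern $q=(S',g)$ appears in a pattern $p=(S,f)$ if there is $v\in\mathbb{Z}^d$ with $v+S'\subseteq S$ and $f(v+j)=g(j)$ for all $j\in S'$. For a finite set $\mathcal{F}$ of finite patterns and $E\subseteq\mathbb{Z}^d$, the Domino game $\Gamma(\mathcal{A},\mathcal{F},E)$ is played by two players $A$ and $B$ who alternate turns, $A$ moving first, starting from the empty pattern. On each turn the current player either passes, or chooses a cell $i\in E$ not yet coloured and a colour $a\in\mathcal{A}$ and colours $i$ with $a$. As soon as some pattern of $\mathcal{F}$ appears in the current pattern, the game ends and $A$ wins; the game also ends if all of $E$ is coloured. $B$ wins if no pattern of $\mathcal{F}$ ever appears. A strategy is winning for a player if that player wins every game in which they follow it. $\llbracket -n,n\rrbracket=\{-n,\dots,n\}$. *)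

theory Defs
  imports Main
begin

text \<open>Cells of Z^d are functions 'd => int for a finite index type 'd (so d = CARD('d) >= 1).
  The finite alphabet is a finite type 'a. A pattern is a partial map cell => colour option;
  its support S is its domain.\<close>

type_synonym ('d, 'a) pattern = "('d \<Rightarrow> int) \<Rightarrow> 'a option"

definition appears :: "('d, 'a) pattern \<Rightarrow> ('d, 'a) pattern \<Rightarrow> bool" where
  "appears q p \<longleftrightarrow> (\<exists>v::'d \<Rightarrow> int. \<forall>j \<in> dom q. p (\<lambda>k. v k + j k) = q j)"

datatype ('d, 'a) move = Pass | Colour "'d \<Rightarrow> int" 'a

fun apply_move :: "('d, 'a) pattern \<Rightarrow> ('d, 'a) move \<Rightarrow> ('d, 'a) pattern" where
  "apply_move p Pass = p"
| "apply_move p (Colour i a) = p(i \<mapsto> a)"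

fun legal :: "('d \<Rightarrow> int) set \<Rightarrow> ('d, 'a) pattern \<Rightarrow> ('d, 'a) move \<Rightarrow> bool" where
  "legal E p Pass = True"
| "legal E p (Colour i a) = (i \<in> E \<and> p i = None)"

text \<open>Current pattern after the first n moves of a play m (turn 0 is A's, turns alternate).\<close>
fun pos :: "(nat \<Rightarrow> ('d, 'a) move) \<Rightarrow> nat \<Rightarrow> ('d, 'a) pattern" where
  "pos m 0 = Map.empty"
| "pos m (Suc n) = apply_move (pos m n) (m n)"

text \<open>It is winning in the Domino game on E if, in every play where A moves legally and B follows it,
  B's moves are legal and no forbidden pattern ever appears. (Once E is fully coloured only
  passes are legal, so ending the game then is the same as continuing with passes.)\<close>
definition B_winning_strategy ::
  "('d, 'a) pattern set \<Rightarrow> ('d \<Rightarrow> int) set \<Rightarrow> (('d, 'a) move list \<Rightarrow> ('d, 'a) move) \<Rightarrow> bool" where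
  "B_winning_strategy F E \<sigma> \<longleftrightarrow>
     (\<forall>m. (\<forall>n. even n \<longrightarrow> legal E (pos m n) (m n)) \<and>
          (\<forall>n. odd n \<longrightarrow> m n = \<sigma> (map m [0..<n]))
      \<longrightarrow> (\<forall>n. odd n \<longrightarrow> legal E (pos m n) (m n)) \<and>
          (\<forall>n. \<forall>q \<in> F. \<not> appears q (pos m n)))"

definition B_wins :: "('d, 'a) pattern set \<Rightarrow> ('d \<Rightarrow> int) set \<Rightarrow> bool" where
  "B_wins F E \<longleftrightarrow> (\<exists>\<sigma>. B_winning_strategy F E \<sigma>)"

definition box :: "int \<Rightarrow> ('d \<Rightarrow> int) set" where
  "box n = {x. \<forall>k. -n \<le> x k \<and> x k \<le> n}"

end

theory Submission
  imports Defs
begin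

text \<open>B has a winning strategy on a set E of cells iff there is a safe region: a set of positions,
  each with the player to move, that contains the empty position, avoids every forbidden pattern,
  is closed under A's legal moves and always offers B a legal move back into it. Restricting the
  positions of a safe region on \<int>^d to a box gives one on the box, B's moves outside the box
  becoming passes. Conversely, from safe regions S_n on the boxes [-n, n]^d take the positions
  that agree on every finite box with positions of S_n for arbitrarily large n. They form a safe
  region on \<int>^d: an occurrence of a finite forbidden pattern is seen on a finite box, and since
  only finitely many moves are legal on a box, B's replies in the S_n can be matched by a reply in
  the limit (a compactness argument).\<close>

section \<open>Safe regions and winning strategies\<close>

definition admissible_play ::
  "(('d, 'a) move list \<Rightarrow> ('d, 'a) move) \<Rightarrow> ('d \<Rightarrow> int) set \<Rightarrow> (nat \<Rightarrow> ('d, 'a) move) \<Rightarrow> bool" where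
  "admissible_play \<sigma> E m \<longleftrightarrow>
     (\<forall>n. even n \<longrightarrow> legal E (pos m n) (m n)) \<and> (\<forall>n. odd n \<longrightarrow> m n = \<sigma> (map m [0..<n]))"

lemma B_winning_strategy_iff:
  "B_winning_strategy F E \<sigma> \<longleftrightarrow>
     (\<forall>m. admissible_play \<sigma> E m \<longrightarrow>
          (\<forall>n. odd n \<longrightarrow> legal E (pos m n) (m n)) \<and> (\<forall>n. \<forall>q\<in>F. \<not> appears q (pos m n)))"
  unfolding B_winning_strategy_def admissible_play_def ..

lemma pos_eq_foldl: "pos m n = foldl apply_move Map.empty (map m [0..<n])"
  by (induction n) auto

lemma pos_cong: "(\<And>j. j < n \<Longrightarrow> m j = m' j) \<Longrightarrow> pos m n = pos m' n"
  by (induction n) auto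

text \<open>The Boolean component of a position records whether A is to move.\<close>
definition safe_region ::
  "('d, 'a) pattern set \<Rightarrow> ('d \<Rightarrow> int) set \<Rightarrow> (('d, 'a) pattern \<times> bool) set \<Rightarrow> bool" where
  "safe_region F E S \<longleftrightarrow>
     (Map.empty, True) \<in> S \<and>
     (\<forall>p t q. (p, t) \<in> S \<longrightarrow> q \<in> F \<longrightarrow> \<not> appears q p) \<and>
     (\<forall>p mv. (p, True) \<in> S \<longrightarrow> legal E p mv \<longrightarrow> (apply_move p mv, False) \<in> S) \<and>
     (\<forall>p. (p, False) \<in> S \<longrightarrow> (\<exists>mv. legal E p mv \<and> (apply_move p mv, True) \<in> S))"

lemma
  assumes "safe_region F E S"
  shows safe_region_start: "(Map.empty, True) \<in> S"
    and safe_region_avoids: "(p, t) \<in> S \<Longrightarrow> q \<in> F \<Longrightarrow> \<not> appears q p"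
    and safe_region_A_move: "(p, True) \<in> S \<Longrightarrow> legal E p mv \<Longrightarrow> (apply_move p mv, False) \<in> S"
    and safe_region_B_move: "(p, False) \<in> S \<Longrightarrow> \<exists>mv. legal E p mv \<and> (apply_move p mv, True) \<in> S"
  using assms unfolding safe_region_def by blast+

lemma B_wins_if_safe_region:
  assumes S: "safe_region F E S"
  shows "B_wins F E"
proof -
  define response where
    "response p = (SOME mv. legal E p mv \<and> (apply_move p mv, True) \<in> S)" for p
  define \<sigma> where "\<sigma> h = response (foldl apply_move Map.empty h)" for h
  have "B_winning_strategy F E \<sigma>"
    unfolding B_winning_strategy_iff
  proof (intro allI impI)
    fix m assume m: "admissible_play \<sigma> E m"
    have B_move: "legal E (pos m n) (m n) \<and> (pos m (Suc n), True) \<in> S"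
      if "odd n" "(pos m n, False) \<in> S" for n
    proof -
      have "m n = response (pos m n)"
        using m that(1) unfolding admissible_play_def \<sigma>_def pos_eq_foldl by blast
      moreover have "legal E (pos m n) (response (pos m n)) \<and>
          (apply_move (pos m n) (response (pos m n)), True) \<in> S"
        unfolding response_def by (rule someI_ex) (rule safe_region_B_move[OF S that(2)])
      ultimately show ?thesis
        by simp
    qed
    have in_S: "(pos m n, even n) \<in> S" for n
    proof (induction n)
      case 0
      show ?case
        using safe_region_start[OF S] by simp
    next
      case (Suc n)
      show ?case
      proof (cases "even n")
        case True
        then have "legal E (pos m n) (m n)"
          using m unfolding admissible_play_def by blast
        then show ?thesis
          using safe_region_A_move[OF S] Suc.IH True by simp
      next
        case False
        then have "(pos m n, False) \<in> S"
          using Suc.IH by simp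
        then show ?thesis
          using B_move False by simp
      qed
    qed
    show "(\<forall>n. odd n \<longrightarrow> legal E (pos m n) (m n)) \<and> (\<forall>n. \<forall>q\<in>F. \<not> appears q (pos m n))"
    proof (intro conjI allI impI ballI)
      fix n :: nat assume "odd n"
      then show "legal E (pos m n) (m n)"
        using B_move in_S[of n] by simp
    next
      fix n q assume "q \<in> F"
      then show "\<not> appears q (pos m n)"
        using safe_region_avoids[OF S in_S] by blast
    qed
  qed
  then show ?thesis
    unfolding B_wins_def by blast
qed

fun history :: "(nat \<Rightarrow> 'b list \<Rightarrow> 'b) \<Rightarrow> nat \<Rightarrow> 'b list" where
  "history g 0 = []"
| "history g (Suc n) = history g n @ [g n (history g n)]"

lemma map_history: "map (\<lambda>i. g i (history g i)) [0..<n] = history g n"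
  by (induction n) auto

lemma admissible_play_extends:
  assumes B_prefix: "\<forall>i<k. odd i \<longrightarrow> f i = \<sigma> (map f [0..<i])"
    and A_prefix: "\<forall>i<k. even i \<longrightarrow> legal E (pos f i) (f i)"
  obtains m where "admissible_play \<sigma> E m" and "\<forall>i<k. m i = f i"
proof
  define g where "g i h = (if i < k then f i else if even i then Pass else \<sigma> h)" for i h
  define m where "m i = g i (history g i)" for i
  have prefix: "\<forall>i<k. m i = f i"
    by (simp add: m_def g_def)
  have history: "map m [0..<n] = history g n" for n
    unfolding m_def by (rule map_history)
  have prefix_map: "map m [0..<n] = map f [0..<n]" and prefix_pos: "pos m n = pos f n"
    if "n < k" for n
    using that prefix by (auto intro: pos_cong)
  show "admissible_play \<sigma> E m"
    unfolding admissible_play_def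
  proof (intro conjI allI impI)
    fix n :: nat assume "even n"
    then show "legal E (pos m n) (m n)"
      using A_prefix prefix prefix_pos by (cases "n < k") (auto simp: m_def g_def)
  next
    fix n :: nat assume "odd n"
    then show "m n = \<sigma> (map m [0..<n])"
      using B_prefix prefix prefix_map history by (cases "n < k") (auto simp: m_def g_def)
  qed
  show "\<forall>i<k. m i = f i"
    by (fact prefix)
qed

lemma safe_region_if_B_wins:
  assumes "B_wins F E"
  obtains S where "safe_region F E S"
proof -
  obtain \<sigma> where \<sigma>: "B_winning_strategy F E \<sigma>"
    using assms unfolding B_wins_def by blast
  define S where "S = {(pos m n, even n) | m n. admissible_play \<sigma> E m}"
  have A_move: "(apply_move (pos m n) mv, False) \<in> S"
    if m: "admissible_play \<sigma> E m" and "even n" and mv: "legal E (pos m n) mv" for m n mv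
  proof -
    define f where "f = m(n := mv)"
    have f_pos: "pos f i = pos m i" and f_map: "map f [0..<i] = map m [0..<i]" if "i \<le> n" for i
      using that by (auto simp: f_def intro: pos_cong)
    have "\<forall>i<Suc n. odd i \<longrightarrow> f i = \<sigma> (map f [0..<i])"
      using m \<open>even n\<close> f_map unfolding admissible_play_def
      by (auto simp: f_def less_Suc_eq)
    moreover have "\<forall>i<Suc n. even i \<longrightarrow> legal E (pos f i) (f i)"
      using m mv f_pos unfolding admissible_play_def by (auto simp: f_def less_Suc_eq)
    ultimately obtain m' where m': "admissible_play \<sigma> E m'" and "\<forall>i<Suc n. m' i = f i"
      by (rule admissible_play_extends)
    then have "pos m' n = pos m n" and "m' n = mv"
      using f_pos[of n] by (auto simp: f_def intro: pos_cong)
    moreover have "(pos m' (Suc n), even (Suc n)) \<in> S"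
      using m' unfolding S_def by blast
    ultimately show ?thesis
      using \<open>even n\<close> by simp
  qed
  have "safe_region F E S"
    unfolding safe_region_def
  proof (intro conjI allI impI ballI)
    obtain m where "admissible_play \<sigma> E m"
      using admissible_play_extends[of 0] by auto
    then have "(pos m 0, even (0::nat)) \<in> S"
      unfolding S_def by blast
    then show "(Map.empty, True) \<in> S"
      by simp
  next
    fix p t q assume "(p, t) \<in> S" "q \<in> F"
    then obtain m n where "admissible_play \<sigma> E m" "p = pos m n"
      unfolding S_def by blast
    then show "\<not> appears q p"
      using \<sigma> \<open>q \<in> F\<close> unfolding B_winning_strategy_iff by blast
  next
    fix p mv assume "(p, True) \<in> S" "legal E p mv"
    then show "(apply_move p mv, False) \<in> S"
      using A_move unfolding S_def by blast
  next
    fix p assume "(p, False) \<in> S"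
    then obtain m n where m: "admissible_play \<sigma> E m" and "odd n" "p = pos m n"
      unfolding S_def by auto
    have "legal E p (m n)"
      using \<sigma> m \<open>odd n\<close> \<open>p = pos m n\<close> unfolding B_winning_strategy_iff by blast
    moreover have "(pos m (Suc n), even (Suc n)) \<in> S"
      using m unfolding S_def by blast
    ultimately show "\<exists>mv. legal E p mv \<and> (apply_move p mv, True) \<in> S"
      using \<open>odd n\<close> \<open>p = pos m n\<close> by auto
  qed
  then show thesis
    by (rule that)
qed

lemma B_wins_iff_safe_region: "B_wins F E \<longleftrightarrow> (\<exists>S. safe_region F E S)"
  using B_wins_if_safe_region safe_region_if_B_wins by metis

section \<open>Restriction to a subset of the cells\<close>

lemma appears_mono: "p \<subseteq>\<^sub>m p' \<Longrightarrow> appears q p \<Longrightarrow> appears q p'"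
  unfolding appears_def map_le_def by (metis domD domI)

lemma restrict_map_le: "p |` A \<subseteq>\<^sub>m p"
  by (auto simp: map_le_def)

lemma safe_region_restrict:
  assumes "A \<subseteq> E" and S: "safe_region F E S"
  shows "safe_region F A ((\<lambda>(p, t). (p |` A, t)) ` S)"
  unfolding safe_region_def
proof (intro conjI allI impI)
  show "(Map.empty, True) \<in> (\<lambda>(p, t). (p |` A, t)) ` S"
    using safe_region_start[OF S] by force
next
  fix p t q assume "(p, t) \<in> (\<lambda>(p, t). (p |` A, t)) ` S" "q \<in> F"
  then obtain p0 where "(p0, t) \<in> S" "p = p0 |` A"
    by auto
  then show "\<not> appears q p"
    using safe_region_avoids[OF S _ \<open>q \<in> F\<close>] appears_mono[OF restrict_map_le] by blast
next
  fix p mv assume "(p, True) \<in> (\<lambda>(p, t). (p |` A, t)) ` S" and mv: "legal A p mv"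
  then obtain p0 where p0: "(p0, True) \<in> S" "p = p0 |` A"
    by auto
  show "(apply_move p mv, False) \<in> (\<lambda>(p, t). (p |` A, t)) ` S"
  proof (cases mv)
    case Pass
    then show ?thesis
      using safe_region_A_move[OF S p0(1), of Pass] p0(2) by force
  next
    case (Colour c a)
    then have "legal E p0 mv" and "p0(c \<mapsto> a) |` A = p(c \<mapsto> a)"
      using mv p0(2) \<open>A \<subseteq> E\<close> by (auto simp: restrict_map_def)
    then have "(p0(c \<mapsto> a), False) \<in> S"
      using safe_region_A_move[OF S p0(1) \<open>legal E p0 mv\<close>] Colour by simp
    then show ?thesis
      using \<open>p0(c \<mapsto> a) |` A = p(c \<mapsto> a)\<close> Colour
      by (intro rev_image_eqI[of "(p0(c \<mapsto> a), False)"]) auto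
  qed
next
  fix p assume "(p, False) \<in> (\<lambda>(p, t). (p |` A, t)) ` S"
  then obtain p0 where p0: "(p0, False) \<in> S" "p = p0 |` A"
    by auto
  then obtain mv where mv: "legal E p0 mv" "(apply_move p0 mv, True) \<in> S"
    using safe_region_B_move[OF S] by blast
  show "\<exists>mv. legal A p mv \<and> (apply_move p mv, True) \<in> (\<lambda>(p, t). (p |` A, t)) ` S"
  proof (cases mv)
    case Pass
    then have "(p0, True) \<in> S"
      using mv(2) by simp
    then show ?thesis
      using p0(2) by (intro exI[of _ Pass]) (auto intro!: rev_image_eqI[of "(p0, True)"])
  next
    case (Colour c a)
    text \<open>A reply of B outside A is seen on A as a pass.\<close>
    show ?thesis
    proof (cases "c \<in> A")
      case True
      then have "legal A p mv" and "p0(c \<mapsto> a) |` A = p(c \<mapsto> a)"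
        using mv(1) p0(2) Colour by (auto simp: restrict_map_def)
      then show ?thesis
        using mv(2) Colour by (intro exI[of _ mv]) (auto intro!: rev_image_eqI[of "(p0(c \<mapsto> a), True)"])
    next
      case False
      then have "p0(c \<mapsto> a) |` A = p"
        using p0(2) by (auto simp: restrict_map_def)
      then show ?thesis
        using mv(2) Colour
        by (intro exI[of _ Pass]) (auto intro!: rev_image_eqI[of "(p0(c \<mapsto> a), True)"])
    qed
  qed
qed

lemma B_wins_subset: "A \<subseteq> E \<Longrightarrow> B_wins F E \<Longrightarrow> B_wins F A"
  using safe_region_restrict B_wins_iff_safe_region by metis

section \<open>Compactness\<close>

lemma finite_legal_moves:
  "finite E \<Longrightarrow> finite {mv :: ('d, 'a::finite) move. legal E p mv}"
proof (rule finite_subset)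
  show "{mv. legal E p mv} \<subseteq> insert Pass (case_prod Colour ` (E \<times> UNIV))"
  proof
    fix mv assume "mv \<in> {mv. legal E p mv}"
    then show "mv \<in> insert Pass (case_prod Colour ` (E \<times> UNIV))"
      by (cases mv) auto
  qed
qed simp

lemma mem_box_iff: "x \<in> box k \<longleftrightarrow> (\<forall>i. \<bar>x i\<bar> \<le> k)"
  by (auto simp: box_def abs_le_iff minus_le_iff)

lemma box_mono: "k \<le> k' \<Longrightarrow> box k \<subseteq> box k'"
  unfolding mem_box_iff subset_iff by (meson order_trans)

lemma finite_box: "finite (box n :: ('d::finite \<Rightarrow> int) set)"
proof (rule finite_subset)
  show "box n \<subseteq> {f. \<forall>i. (i \<in> UNIV \<longrightarrow> f i \<in> {-n..n}) \<and> (i \<notin> UNIV \<longrightarrow> f i = 0)}"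
    unfolding box_def by auto
  show "finite {f :: 'd \<Rightarrow> int. \<forall>i. (i \<in> UNIV \<longrightarrow> f i \<in> {-n..n}) \<and> (i \<notin> UNIV \<longrightarrow> f i = 0)}"
    by (rule finite_set_of_finite_funs) auto
qed

lemma eventually_in_box: "\<forall>\<^sub>F k in at_top. (c :: 'd::finite \<Rightarrow> int) \<in> box k"
proof -
  have "\<forall>\<^sub>F k in at_top. \<bar>c i\<bar> \<le> k" for i
    by (rule eventually_ge_at_top)
  then have "\<forall>\<^sub>F k in at_top. \<forall>i. \<bar>c i\<bar> \<le> k"
    by (rule eventually_all_finite)
  then show ?thesis
    unfolding mem_box_iff .
qed

lemma eventually_subset_box:
  "finite X \<Longrightarrow> \<forall>\<^sub>F k in at_top. X \<subseteq> (box k :: ('d::finite \<Rightarrow> int) set)"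
  using eventually_ball_finite[OF _ ballI[OF eventually_in_box]] by (simp add: subset_eq)

lemma appears_eventually_in_box:
  fixes p :: "('d::finite, 'a) pattern"
  assumes "appears q p" and "finite (dom q)"
  shows "\<forall>\<^sub>F k in at_top. appears q (p |` box k)"
proof -
  obtain v where v: "\<forall>j \<in> dom q. p (\<lambda>i. v i + j i) = q j"
    using assms(1) unfolding appears_def by blast
  have "\<forall>\<^sub>F k in at_top. (\<lambda>j i. v i + j i) ` dom q \<subseteq> box k"
    using assms(2) by (intro eventually_subset_box) simp
  then show ?thesis
  proof eventually_elim
    case (elim k)
    have "(p |` box k) (\<lambda>i. v i + j i) = q j" if "j \<in> dom q" for j
      using elim v that by (simp add: image_subset_iff)
    then show ?case
      unfolding appears_def by blast
  qed
qed

lemma restrict_map_eq_mono: "p |` B = p' |` B \<Longrightarrow> A \<subseteq> B \<Longrightarrow> p |` A = p' |` A"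
  by (metis Int_absorb1 restrict_restrict)

lemma restrict_map_eq_apply: "p |` A = p' |` A \<Longrightarrow> x \<in> A \<Longrightarrow> p x = p' x"
  by (metis restrict_in)

lemma restrict_map_eq_upd: "p |` A = p' |` A \<Longrightarrow> p(c \<mapsto> a) |` A = p'(c \<mapsto> a) |` A"
  by (simp add: restrict_map_def fun_eq_iff) metis

definition approximable ::
  "(int \<Rightarrow> (('d, 'a) pattern \<times> bool) set) \<Rightarrow> int \<Rightarrow> ('d, 'a) pattern \<Rightarrow> bool \<Rightarrow> bool" where
  "approximable SS k p t \<longleftrightarrow> (\<exists>n \<ge> k. \<exists>p'. (p', t) \<in> SS n \<and> p |` box k = p' |` box k)"

text \<open>The positions that are limits, in the product topology, of positions in SS n as n \<rightarrow> \<infinity>.\<close>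
definition limit_region ::
  "(int \<Rightarrow> (('d, 'a) pattern \<times> bool) set) \<Rightarrow> (('d, 'a) pattern \<times> bool) set" where
  "limit_region SS = {(p, t). \<forall>k. approximable SS k p t}"

lemma approximable_mono: "approximable SS k' p t \<Longrightarrow> k \<le> k' \<Longrightarrow> approximable SS k p t"
  unfolding approximable_def by (meson box_mono order_trans restrict_map_eq_mono)

lemma eventually_not_approximable:
  "\<not> approximable SS k p t \<Longrightarrow> \<forall>\<^sub>F k' in at_top. \<not> approximable SS k' p t"
  using eventually_ge_at_top[of k] by eventually_elim (use approximable_mono in blast)

lemma limit_regionI:
  assumes "\<forall>\<^sub>F k in at_top. approximable SS k p t"
  shows "(p, t) \<in> limit_region SS"
proof -
  have "approximable SS k p t" for k
  proof -
    obtain K where "approximable SS K p t" "k \<le> K"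
      using eventually_happens'[OF trivial_limit_at_top_linorder
          eventually_conj[OF assms eventually_ge_at_top[of k]]] by blast
    then show ?thesis
      by (rule approximable_mono)
  qed
  then show ?thesis
    unfolding limit_region_def by blast
qed

lemma limit_regionD: "(p, t) \<in> limit_region SS \<Longrightarrow> approximable SS k p t"
  unfolding limit_region_def by blast

context
  fixes F :: "('d::finite, 'a::finite) pattern set"
    and SS :: "int \<Rightarrow> (('d, 'a) pattern \<times> bool) set"
  assumes safe_boxes: "\<And>n. n \<ge> 1 \<Longrightarrow> safe_region F (box n) (SS n)"
begin

lemma limit_region_start: "(Map.empty, True) \<in> limit_region SS"
proof (rule limit_regionI)
  show "\<forall>\<^sub>F k in at_top. approximable SS k Map.empty True"
    using eventually_ge_at_top[of 1]
    by eventually_elim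
      (use safe_region_start[OF safe_boxes] in \<open>auto simp: approximable_def intro!: exI[of _ Map.empty]\<close>)
qed

lemma limit_region_avoids:
  assumes "finite (dom q)" and "(p, t) \<in> limit_region SS" and "q \<in> F"
  shows "\<not> appears q p"
proof
  assume "appears q p"
  then obtain k where "appears q (p |` box k)" "k \<ge> 1"
    using eventually_happens'[OF trivial_limit_at_top_linorder
        eventually_conj[OF appears_eventually_in_box[OF _ assms(1)] eventually_ge_at_top[of 1]]]
    by blast
  moreover obtain n p' where "n \<ge> k" "(p', t) \<in> SS n" "p |` box k = p' |` box k"
    using limit_regionD[OF assms(2)] unfolding approximable_def by blast
  ultimately show False
    using safe_region_avoids[OF safe_boxes] appears_mono[OF restrict_map_le] assms(3)
    by (metis order_trans)
qed

lemma approximable_A_move: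
  assumes "approximable SS k p True" and "k \<ge> 1" and "legal UNIV p mv"
    and "\<forall>c a. mv = Colour c a \<longrightarrow> c \<in> box k"
  shows "approximable SS k (apply_move p mv) False"
proof -
  obtain n p' where "n \<ge> k" and p': "(p', True) \<in> SS n" and agree: "p |` box k = p' |` box k"
    using assms(1) unfolding approximable_def by blast
  have "legal (box n) p' mv"
  proof (cases mv)
    case (Colour c a)
    then have "c \<in> box k"
      using assms(4) by blast
    then have "p' c = p c" and "c \<in> box n"
      using agree box_mono[OF \<open>n \<ge> k\<close>] by (auto dest: restrict_map_eq_apply)
    then show ?thesis
      using assms(3) Colour by simp
  qed simp
  then have "(apply_move p' mv, False) \<in> SS n"
    using safe_region_A_move[OF safe_boxes p'] \<open>n \<ge> k\<close> \<open>k \<ge> 1\<close> by simp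
  moreover have "apply_move p mv |` box k = apply_move p' mv |` box k"
    by (cases mv) (simp_all only: apply_move.simps agree restrict_map_eq_upd[OF agree])
  ultimately show ?thesis
    using \<open>n \<ge> k\<close> unfolding approximable_def by blast
qed

lemma limit_region_A_move:
  assumes "(p, True) \<in> limit_region SS" and "legal UNIV p mv"
  shows "(apply_move p mv, False) \<in> limit_region SS"
proof (rule limit_regionI)
  have "\<forall>\<^sub>F k in at_top. k \<ge> 1 \<and> (\<forall>c a. mv = Colour c a \<longrightarrow> c \<in> box k)"
  proof (cases mv)
    case Pass
    then show ?thesis
      by simp
  next
    case (Colour c a)
    then show ?thesis
      using eventually_conj[OF eventually_ge_at_top eventually_in_box[of c]] by simp
  qed
  then show "\<forall>\<^sub>F k in at_top. approximable SS k (apply_move p mv) False"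
    by eventually_elim (use approximable_A_move limit_regionD[OF assms(1)] assms(2) in blast)
qed

lemma approximable_B_move:
  assumes "approximable SS K p False" and "K \<ge> 1" and "k \<le> K"
  shows "approximable SS k p True \<or> (\<exists>mv. legal (box k) p mv \<and> approximable SS K (apply_move p mv) True)"
proof -
  obtain n p' where "n \<ge> K" and p': "(p', False) \<in> SS n" and agree: "p |` box K = p' |` box K"
    using assms(1) unfolding approximable_def by blast
  then obtain mv where reply: "(apply_move p' mv, True) \<in> SS n" "legal (box n) p' mv"
    using safe_region_B_move[OF safe_boxes] \<open>K \<ge> 1\<close> by (meson order_trans)
  show ?thesis
  proof (cases "\<exists>c a. mv = Colour c a \<and> c \<in> box k")
    case True
    then obtain c a where mv: "mv = Colour c a" "c \<in> box k"
      by blast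
    have "c \<in> box K"
      using mv(2) box_mono[OF \<open>k \<le> K\<close>] by blast
    then have "p c = p' c"
      by (rule restrict_map_eq_apply[OF agree])
    then have "legal (box k) p mv"
      using mv reply(2) by simp
    moreover have "apply_move p mv |` box K = apply_move p' mv |` box K"
      unfolding mv(1) apply_move.simps by (rule restrict_map_eq_upd[OF agree])
    then have "approximable SS K (apply_move p mv) True"
      using reply(1) \<open>n \<ge> K\<close> unfolding approximable_def by blast
    ultimately show ?thesis
      by blast
  next
    case False
    have "p |` box k = p' |` box k"
      using agree box_mono[OF \<open>k \<le> K\<close>] by (rule restrict_map_eq_mono)
    then have "p |` box k = apply_move p' mv |` box k"
      using False by (cases mv) auto
    then have "approximable SS k p True"
      using reply(1) \<open>n \<ge> K\<close> \<open>k \<le> K\<close> unfolding approximable_def by (meson order_trans)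
    then show ?thesis
      by blast
  qed
qed

lemma limit_region_B_move:
  assumes "(p, False) \<in> limit_region SS"
  shows "\<exists>mv. legal UNIV p mv \<and> (apply_move p mv, True) \<in> limit_region SS"
proof (rule ccontr)
  assume no_move: "\<not> ?thesis"
  then have "(p, True) \<notin> limit_region SS"
    by (metis apply_move.simps(1) legal.simps(1))
  then obtain k where k: "\<not> approximable SS k p True"
    unfolding limit_region_def by blast
  text \<open>Only finitely many moves are legal on box k, so one K defeats all their approximations.\<close>
  have "\<forall>mv \<in> {mv. legal (box k) p mv}. \<forall>\<^sub>F K in at_top. \<not> approximable SS K (apply_move p mv) True"
  proof
    fix mv assume "mv \<in> {mv. legal (box k) p mv}"
    then have "legal UNIV p mv"
      by (cases mv) auto
    then have "(apply_move p mv, True) \<notin> limit_region SS"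
      using no_move by blast
    then show "\<forall>\<^sub>F K in at_top. \<not> approximable SS K (apply_move p mv) True"
      unfolding limit_region_def by (blast intro: eventually_not_approximable)
  qed
  then have "\<forall>\<^sub>F K in at_top. \<forall>mv \<in> {mv. legal (box k) p mv}. \<not> approximable SS K (apply_move p mv) True"
    by (rule eventually_ball_finite[OF finite_legal_moves[OF finite_box]])
  then obtain K where "K \<ge> 1" "k \<le> K" and "\<forall>mv. legal (box k) p mv \<longrightarrow> \<not> approximable SS K (apply_move p mv) True"
    using eventually_happens'[OF trivial_limit_at_top_linorder
        eventually_conj[OF _ eventually_ge_at_top[of "max k 1"]]] by auto
  then show False
    using approximable_B_move[OF limit_regionD[OF assms]] k by blast
qed

lemma safe_region_limit_region:
  assumes "\<forall>q \<in> F. finite (dom q)"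
  shows "safe_region F UNIV (limit_region SS)"
  unfolding safe_region_def
proof (intro conjI allI impI)
  show "(Map.empty, True) \<in> limit_region SS"
    by (rule limit_region_start)
  show "\<not> appears q p" if "(p, t) \<in> limit_region SS" "q \<in> F" for p t q
    using limit_region_avoids that assms by blast
  show "(apply_move p mv, False) \<in> limit_region SS"
    if "(p, True) \<in> limit_region SS" "legal UNIV p mv" for p mv
    using limit_region_A_move that by blast
  show "\<exists>mv. legal UNIV p mv \<and> (apply_move p mv, True) \<in> limit_region SS"
    if "(p, False) \<in> limit_region SS" for p
    using limit_region_B_move that by blast
qed

end

lemma B_wins_UNIV_if_B_wins_boxes:
  fixes F :: "('d::finite, 'a::finite) pattern set"
  assumes "\<forall>q \<in> F. finite (dom q)" and "\<And>n. n \<ge> 1 \<Longrightarrow> B_wins F (box n)"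
  shows "B_wins F UNIV"
proof -
  have "\<forall>n. \<exists>S. n \<ge> 1 \<longrightarrow> safe_region F (box n) S"
    using assms(2) unfolding B_wins_iff_safe_region by blast
  then obtain SS where SS: "\<And>n. n \<ge> 1 \<Longrightarrow> safe_region F (box n) (SS n)"
    by metis
  have "safe_region F UNIV (limit_region SS)"
    using safe_region_limit_region[OF SS assms(1)] .
  then show ?thesis
    by (rule B_wins_if_safe_region)
qed

theorem lemma1:
  fixes F :: "('d::finite, 'a::finite) pattern set"
  assumes "finite F" and "\<forall>q \<in> F. finite (dom q)"
  shows "B_wins F (UNIV :: ('d \<Rightarrow> int) set) \<longleftrightarrow> (\<forall>n::int. n \<ge> 1 \<longrightarrow> B_wins F (box n :: ('d \<Rightarrow> int) set))"
  using B_wins_subset[OF subset_UNIV] B_wins_UNIV_if_B_wins_boxes[OF assms(2)] by blast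

end
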